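(* Let $\mathcal A$ be an additive category and let $\mathcal J_1,\mathcal J_2$ be ideals of $\mathcal A$. If $\mathcal J_1$ and $\mathcal J_2$ are both preenveloping, then so is $\mathcal J_1+\mathcal J_2$. Likewise, if $\mathcal J_1$ and $\mathcal J_2$ are both precovering, then so is $\mathcal J_1+\mathcal J_2$.
   Context: An ideal $\mathcal J$ of an additive category $\mathcal A$ assigns to each pair of objects $(A,B)$ a subgroup $\mathcal J(A,B)\subseteq \mathrm{Hom}(A,B)$ such that $fgh\in\mathcal J$ whenever $g\in\mathcal J$ and $f,h$ are arbitrary composable morphisms. The sum $\mathcal J_1+\mathcal J_2$ is given by $(\mathcal J_1+\mathcal J_2)(A,B)=\mathcal J_1(A,B)+\mathcal J_2(A,B)$. An ideal $\mathcal J$ is preenveloping if for every object $B$ there is a morphism $j:B\to J$ in $\mathcal J$ such that every morphism $j':B\to J'$ in $\mathcal J$ factors as $j'=gj$ for some $g:J\to J'$ (such $j$ is a $\mathcal J$-preenvelope). Dually, $\mathcal I$ is precovering if every object $A$ admits $i:I\to A$ in $\mathcal I$ through which every morphism $I'\to A$ in $\mathcal I$ factors. *)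

theory Defs
  imports "HOL-Algebra.Group"
begin

text \<open>An additive category, presented concretely: a set of objects Ob, pairwise
disjoint hom-sets Hom A B, composition cmp g f (meaning g after f), identities,
an addition add on morphisms and zero morphisms zero A B making every hom-set an
abelian group, bilinear composition, a zero object and binary biproducts.\<close>

definition hom_group :: "('o \<Rightarrow> 'o \<Rightarrow> 'm set) \<Rightarrow> ('m \<Rightarrow> 'm \<Rightarrow> 'm) \<Rightarrow> ('o \<Rightarrow> 'o \<Rightarrow> 'm)
    \<Rightarrow> 'o \<Rightarrow> 'o \<Rightarrow> 'm monoid" where
  "hom_group Hom add zero A B = \<lparr>carrier = Hom A B, mult = add, one = zero A B\<rparr>"

definition category ::
  "'o set \<Rightarrow> ('o \<Rightarrow> 'o \<Rightarrow> 'm set) \<Rightarrow> ('m \<Rightarrow> 'm \<Rightarrow> 'm) \<Rightarrow> ('o \<Rightarrow> 'm) \<Rightarrow> bool" where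
  "category Ob Hom cmp ident \<longleftrightarrow>
     (\<forall>A\<in>Ob. \<forall>B\<in>Ob. \<forall>A'\<in>Ob. \<forall>B'\<in>Ob. (A, B) \<noteq> (A', B') \<longrightarrow> Hom A B \<inter> Hom A' B' = {}) \<and>
     (\<forall>A\<in>Ob. \<forall>B\<in>Ob. \<forall>C\<in>Ob. \<forall>f\<in>Hom A B. \<forall>g\<in>Hom B C. cmp g f \<in> Hom A C) \<and>
     (\<forall>A\<in>Ob. \<forall>B\<in>Ob. \<forall>C\<in>Ob. \<forall>D\<in>Ob. \<forall>f\<in>Hom A B. \<forall>g\<in>Hom B C. \<forall>h\<in>Hom C D.
        cmp h (cmp g f) = cmp (cmp h g) f) \<and>
     (\<forall>A\<in>Ob. ident A \<in> Hom A A) \<and>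
     (\<forall>A\<in>Ob. \<forall>B\<in>Ob. \<forall>f\<in>Hom A B. cmp (ident B) f = f \<and> cmp f (ident A) = f)"

definition preadditive_category ::
  "'o set \<Rightarrow> ('o \<Rightarrow> 'o \<Rightarrow> 'm set) \<Rightarrow> ('m \<Rightarrow> 'm \<Rightarrow> 'm) \<Rightarrow> ('o \<Rightarrow> 'm)
     \<Rightarrow> ('m \<Rightarrow> 'm \<Rightarrow> 'm) \<Rightarrow> ('o \<Rightarrow> 'o \<Rightarrow> 'm) \<Rightarrow> bool" where
  "preadditive_category Ob Hom cmp ident add zero \<longleftrightarrow>
     category Ob Hom cmp ident \<and>
     (\<forall>A\<in>Ob. \<forall>B\<in>Ob. comm_group (hom_group Hom add zero A B)) \<and>
     (\<forall>A\<in>Ob. \<forall>B\<in>Ob. \<forall>C\<in>Ob. \<forall>f\<in>Hom A B. \<forall>f'\<in>Hom A B. \<forall>g\<in>Hom B C. \<forall>g'\<in>Hom B C.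
        cmp g (add f f') = add (cmp g f) (cmp g f') \<and>
        cmp (add g g') f = add (cmp g f) (cmp g' f))"

definition additive_category ::
  "'o set \<Rightarrow> ('o \<Rightarrow> 'o \<Rightarrow> 'm set) \<Rightarrow> ('m \<Rightarrow> 'm \<Rightarrow> 'm) \<Rightarrow> ('o \<Rightarrow> 'm)
     \<Rightarrow> ('m \<Rightarrow> 'm \<Rightarrow> 'm) \<Rightarrow> ('o \<Rightarrow> 'o \<Rightarrow> 'm) \<Rightarrow> bool" where
  "additive_category Ob Hom cmp ident add zero \<longleftrightarrow>
     preadditive_category Ob Hom cmp ident add zero \<and>
     (\<exists>Z\<in>Ob. ident Z = zero Z Z) \<and>
     (\<forall>A\<in>Ob. \<forall>B\<in>Ob. \<exists>C\<in>Ob. \<exists>i1\<in>Hom A C. \<exists>i2\<in>Hom B C. \<exists>p1\<in>Hom C A. \<exists>p2\<in>Hom C B.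
        cmp p1 i1 = ident A \<and> cmp p2 i2 = ident B \<and>
        cmp p1 i2 = zero B A \<and> cmp p2 i1 = zero A B \<and>
        add (cmp i1 p1) (cmp i2 p2) = ident C)"

definition is_ideal ::
  "'o set \<Rightarrow> ('o \<Rightarrow> 'o \<Rightarrow> 'm set) \<Rightarrow> ('m \<Rightarrow> 'm \<Rightarrow> 'm) \<Rightarrow> ('m \<Rightarrow> 'm \<Rightarrow> 'm) \<Rightarrow> ('o \<Rightarrow> 'o \<Rightarrow> 'm)
     \<Rightarrow> ('o \<Rightarrow> 'o \<Rightarrow> 'm set) \<Rightarrow> bool" where
  "is_ideal Ob Hom cmp add zero J \<longleftrightarrow>
     (\<forall>A\<in>Ob. \<forall>B\<in>Ob. subgroup (J A B) (hom_group Hom add zero A B)) \<and>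
     (\<forall>A\<in>Ob. \<forall>B\<in>Ob. \<forall>C\<in>Ob. \<forall>D\<in>Ob. \<forall>h\<in>Hom A B. \<forall>g\<in>J B C. \<forall>f\<in>Hom C D.
        cmp f (cmp g h) \<in> J A D)"

definition ideal_sum ::
  "('m \<Rightarrow> 'm \<Rightarrow> 'm) \<Rightarrow> ('o \<Rightarrow> 'o \<Rightarrow> 'm set) \<Rightarrow> ('o \<Rightarrow> 'o \<Rightarrow> 'm set) \<Rightarrow> ('o \<Rightarrow> 'o \<Rightarrow> 'm set)" where
  "ideal_sum add J1 J2 = (\<lambda>A B. {add f g | f g. f \<in> J1 A B \<and> g \<in> J2 A B})"

definition preenveloping ::
  "'o set \<Rightarrow> ('o \<Rightarrow> 'o \<Rightarrow> 'm set) \<Rightarrow> ('m \<Rightarrow> 'm \<Rightarrow> 'm) \<Rightarrow> ('o \<Rightarrow> 'o \<Rightarrow> 'm set) \<Rightarrow> bool" where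
  "preenveloping Ob Hom cmp J \<longleftrightarrow>
     (\<forall>B\<in>Ob. \<exists>E\<in>Ob. \<exists>j\<in>J B E. \<forall>E'\<in>Ob. \<forall>j'\<in>J B E'. \<exists>g\<in>Hom E E'. j' = cmp g j)"

definition precovering ::
  "'o set \<Rightarrow> ('o \<Rightarrow> 'o \<Rightarrow> 'm set) \<Rightarrow> ('m \<Rightarrow> 'm \<Rightarrow> 'm) \<Rightarrow> ('o \<Rightarrow> 'o \<Rightarrow> 'm set) \<Rightarrow> bool" where
  "precovering Ob Hom cmp J \<longleftrightarrow>
     (\<forall>A\<in>Ob. \<exists>I\<in>Ob. \<exists>i\<in>J I A. \<forall>I'\<in>Ob. \<forall>i'\<in>J I' A. \<exists>g\<in>Hom I' I. i' = cmp i g)"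

end

theory Submission
  imports Defs
begin

text \<open>If \<open>j\<^sub>1 : B \<rightarrow> E\<^sub>1\<close> and \<open>j\<^sub>2 : B \<rightarrow> E\<^sub>2\<close> are a \<open>J\<^sub>1\<close>- and a
\<open>J\<^sub>2\<close>-preenvelope, then \<open>i\<^sub>1 j\<^sub>1 + i\<^sub>2 j\<^sub>2 : B \<rightarrow> E\<^sub>1 \<oplus> E\<^sub>2\<close> is a
\<open>(J\<^sub>1 + J\<^sub>2)\<close>-preenvelope: a morphism of \<open>J\<^sub>1 + J\<^sub>2\<close> has the form
\<open>g\<^sub>1 j\<^sub>1 + g\<^sub>2 j\<^sub>2\<close>, and it factors through \<open>g\<^sub>1 p\<^sub>1 + g\<^sub>2 p\<^sub>2\<close> because
\<open>p\<^sub>k i\<^sub>l\<close> is the identity for \<open>k = l\<close> and zero otherwise. Precovers are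
preenvelopes in the opposite category, which is again additive and carries the opposite
ideals, so the second half is the first one applied there.\<close>

lemma ideal_subset_Hom:
  "is_ideal Ob Hom cmp add zero J \<Longrightarrow> A \<in> Ob \<Longrightarrow> B \<in> Ob \<Longrightarrow> J A B \<subseteq> Hom A B"
  unfolding is_ideal_def using subgroup.subset[of "J A B" "hom_group Hom add zero A B"]
  by (auto simp: hom_group_def)

locale additive_cat =
  fixes Ob :: "'o set" and Hom :: "'o \<Rightarrow> 'o \<Rightarrow> 'm set"
    and cmp :: "'m \<Rightarrow> 'm \<Rightarrow> 'm" and ident :: "'o \<Rightarrow> 'm"
    and add :: "'m \<Rightarrow> 'm \<Rightarrow> 'm" and zero :: "'o \<Rightarrow> 'o \<Rightarrow> 'm"
  assumes additive: "additive_category Ob Hom cmp ident add zero"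
begin

lemma category: "category Ob Hom cmp ident"
  using additive unfolding additive_category_def preadditive_category_def by blast

lemma cmp_closed: "A \<in> Ob \<Longrightarrow> B \<in> Ob \<Longrightarrow> C \<in> Ob \<Longrightarrow> f \<in> Hom A B \<Longrightarrow> g \<in> Hom B C
    \<Longrightarrow> cmp g f \<in> Hom A C"
  using category unfolding category_def by blast

lemma cmp_assoc: "A \<in> Ob \<Longrightarrow> B \<in> Ob \<Longrightarrow> C \<in> Ob \<Longrightarrow> D \<in> Ob
    \<Longrightarrow> f \<in> Hom A B \<Longrightarrow> g \<in> Hom B C \<Longrightarrow> h \<in> Hom C D \<Longrightarrow> cmp h (cmp g f) = cmp (cmp h g) f"
  using category unfolding category_def by blast

lemma ident_closed: "A \<in> Ob \<Longrightarrow> ident A \<in> Hom A A"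
  using category unfolding category_def by blast

lemma cmp_ident_left: "A \<in> Ob \<Longrightarrow> B \<in> Ob \<Longrightarrow> f \<in> Hom A B \<Longrightarrow> cmp (ident B) f = f"
  using category unfolding category_def by blast

lemma cmp_ident_right: "A \<in> Ob \<Longrightarrow> B \<in> Ob \<Longrightarrow> f \<in> Hom A B \<Longrightarrow> cmp f (ident A) = f"
  using category unfolding category_def by blast

lemma cmp_add_right: "A \<in> Ob \<Longrightarrow> B \<in> Ob \<Longrightarrow> C \<in> Ob \<Longrightarrow> f \<in> Hom A B \<Longrightarrow> f' \<in> Hom A B
    \<Longrightarrow> g \<in> Hom B C \<Longrightarrow> cmp g (add f f') = add (cmp g f) (cmp g f')"
  using additive unfolding additive_category_def preadditive_category_def by blast

lemma cmp_add_left: "A \<in> Ob \<Longrightarrow> B \<in> Ob \<Longrightarrow> C \<in> Ob \<Longrightarrow> f \<in> Hom A B \<Longrightarrow> g \<in> Hom B C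
    \<Longrightarrow> g' \<in> Hom B C \<Longrightarrow> cmp (add g g') f = add (cmp g f) (cmp g' f)"
  using additive unfolding additive_category_def preadditive_category_def by blast

lemma obtain_biproduct:
  assumes "A \<in> Ob" "B \<in> Ob"
  obtains C i1 i2 p1 p2 where "C \<in> Ob"
    "i1 \<in> Hom A C" "i2 \<in> Hom B C" "p1 \<in> Hom C A" "p2 \<in> Hom C B"
    "cmp p1 i1 = ident A" "cmp p2 i2 = ident B" "cmp p1 i2 = zero B A" "cmp p2 i1 = zero A B"
  using additive assms unfolding additive_category_def by blast

context
  fixes A B assumes A: "A \<in> Ob" and B: "B \<in> Ob"
begin

interpretation hom: comm_group "hom_group Hom add zero A B"
  using additive A B unfolding additive_category_def preadditive_category_def by blast

lemma add_closed: "f \<in> Hom A B \<Longrightarrow> g \<in> Hom A B \<Longrightarrow> add f g \<in> Hom A B"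
  using hom.m_closed by (simp add: hom_group_def)

lemma zero_closed: "zero A B \<in> Hom A B"
  using hom.one_closed by (simp add: hom_group_def)

lemma add_zero: "f \<in> Hom A B \<Longrightarrow> add f (zero A B) = f"
  using hom.r_one by (simp add: hom_group_def)

lemma zero_add: "f \<in> Hom A B \<Longrightarrow> add (zero A B) f = f"
  using hom.l_one by (simp add: hom_group_def)

lemma add_idem_imp_zero: "f \<in> Hom A B \<Longrightarrow> add f f = f \<Longrightarrow> f = zero A B"
  using hom.l_cancel_one[of f f] by (simp add: hom_group_def)

end

lemma cmp_zero_right:
  assumes "A \<in> Ob" "B \<in> Ob" "C \<in> Ob" "g \<in> Hom B C"
  shows "cmp g (zero A B) = zero A C"
proof (rule add_idem_imp_zero)
  have "add (cmp g (zero A B)) (cmp g (zero A B)) = cmp g (add (zero A B) (zero A B))"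
    using cmp_add_right zero_closed assms by simp
  then show "add (cmp g (zero A B)) (cmp g (zero A B)) = cmp g (zero A B)"
    using zero_add zero_closed assms by simp
qed (use assms cmp_closed zero_closed in auto)

lemma cmp_zero_left:
  assumes "A \<in> Ob" "B \<in> Ob" "C \<in> Ob" "f \<in> Hom A B"
  shows "cmp (zero B C) f = zero A C"
proof (rule add_idem_imp_zero)
  have "add (cmp (zero B C) f) (cmp (zero B C) f) = cmp (add (zero B C) (zero B C)) f"
    using cmp_add_left zero_closed assms by simp
  then show "add (cmp (zero B C) f) (cmp (zero B C) f) = cmp (zero B C) f"
    using zero_add zero_closed assms by simp
qed (use assms cmp_closed zero_closed in auto)

lemma cmp_through_biproduct:
  assumes ob: "X \<in> Ob" "Y1 \<in> Ob" "Y2 \<in> Ob" "C \<in> Ob" "Z \<in> Ob"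
    and inj: "i1 \<in> Hom Y1 C" "i2 \<in> Hom Y2 C" and proj: "p1 \<in> Hom C Y1" "p2 \<in> Hom C Y2"
    and biprod: "cmp p1 i1 = ident Y1" "cmp p2 i2 = ident Y2"
      "cmp p1 i2 = zero Y2 Y1" "cmp p2 i1 = zero Y1 Y2"
    and u: "u1 \<in> Hom X Y1" "u2 \<in> Hom X Y2" and v: "v1 \<in> Hom Y1 Z" "v2 \<in> Hom Y2 Z"
  shows "cmp (add (cmp v1 p1) (cmp v2 p2)) (add (cmp i1 u1) (cmp i2 u2))
       = add (cmp v1 u1) (cmp v2 u2)"
proof -
  have entry: "cmp (cmp v p) (cmp i u) = cmp v (cmp (cmp p i) u)"
    if "Y \<in> Ob" "Y' \<in> Ob" "v \<in> Hom Y Z" "p \<in> Hom C Y" "i \<in> Hom Y' C" "u \<in> Hom X Y'"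
    for Y Y' v p i u
  proof -
    have "cmp (cmp v p) (cmp i u) = cmp (cmp (cmp v p) i) u"
      using that ob cmp_closed cmp_assoc[of X Y' C Z u i "cmp v p"] by blast
    also have "cmp (cmp v p) i = cmp v (cmp p i)"
      using that ob cmp_assoc[of Y' C Y Z i p v] by simp
    also have "cmp (cmp v (cmp p i)) u = cmp v (cmp (cmp p i) u)"
      using that ob cmp_closed cmp_assoc[of X Y' Y Z u "cmp p i" v] by simp
    finally show ?thesis .
  qed
  have vp: "cmp v1 p1 \<in> Hom C Z" "cmp v2 p2 \<in> Hom C Z"
    and iu: "cmp i1 u1 \<in> Hom X C" "cmp i2 u2 \<in> Hom X C"
    using cmp_closed ob inj proj u v by blast+
  have "cmp (add (cmp v1 p1) (cmp v2 p2)) (add (cmp i1 u1) (cmp i2 u2))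
      = add (cmp (cmp v1 p1) (add (cmp i1 u1) (cmp i2 u2)))
            (cmp (cmp v2 p2) (add (cmp i1 u1) (cmp i2 u2)))"
    using ob vp iu by (simp add: cmp_add_left add_closed)
  also have "\<dots> = add (add (cmp (cmp v1 p1) (cmp i1 u1)) (cmp (cmp v1 p1) (cmp i2 u2)))
            (add (cmp (cmp v2 p2) (cmp i1 u1)) (cmp (cmp v2 p2) (cmp i2 u2)))"
    using ob vp iu by (simp add: cmp_add_right)
  also have "\<dots> = add (add (cmp v1 u1) (zero X Z)) (add (zero X Z) (cmp v2 u2))"
    using entry[of Y1 Y1 v1 p1 i1 u1] entry[of Y1 Y2 v1 p1 i2 u2]
      entry[of Y2 Y1 v2 p2 i1 u1] entry[of Y2 Y2 v2 p2 i2 u2] ob inj proj u v biprod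
    by (simp add: cmp_ident_left cmp_zero_left cmp_zero_right)
  also have "\<dots> = add (cmp v1 u1) (cmp v2 u2)"
    using ob u v by (simp add: cmp_closed add_zero zero_add)
  finally show ?thesis .
qed

lemma ideal_cmp_left:
  assumes J: "is_ideal Ob Hom cmp add zero J"
    and "A \<in> Ob" "B \<in> Ob" "C \<in> Ob" "j \<in> J A B" "i \<in> Hom B C"
  shows "cmp i j \<in> J A C"
proof -
  have "cmp i (cmp j (ident A)) \<in> J A C"
    using J assms ident_closed unfolding is_ideal_def by blast
  then show ?thesis
    using assms ideal_subset_Hom[OF J, of A B] cmp_ident_right by (metis subsetD)
qed

lemma preenveloping_ideal_sum:
  assumes J1: "is_ideal Ob Hom cmp add zero J1" and J2: "is_ideal Ob Hom cmp add zero J2"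
    and env1: "preenveloping Ob Hom cmp J1" and env2: "preenveloping Ob Hom cmp J2"
  shows "preenveloping Ob Hom cmp (ideal_sum add J1 J2)"
  unfolding preenveloping_def
proof
  fix B assume B: "B \<in> Ob"
  obtain E1 j1 where E1: "E1 \<in> Ob" and j1: "j1 \<in> J1 B E1"
    and factor1: "\<And>E' j'. E' \<in> Ob \<Longrightarrow> j' \<in> J1 B E' \<Longrightarrow> \<exists>g\<in>Hom E1 E'. j' = cmp g j1"
    using env1 B unfolding preenveloping_def by blast
  obtain E2 j2 where E2: "E2 \<in> Ob" and j2: "j2 \<in> J2 B E2"
    and factor2: "\<And>E' j'. E' \<in> Ob \<Longrightarrow> j' \<in> J2 B E' \<Longrightarrow> \<exists>g\<in>Hom E2 E'. j' = cmp g j2"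
    using env2 B unfolding preenveloping_def by blast
  obtain C i1 i2 p1 p2 where C: "C \<in> Ob"
    and inj: "i1 \<in> Hom E1 C" "i2 \<in> Hom E2 C" and proj: "p1 \<in> Hom C E1" "p2 \<in> Hom C E2"
    and biprod: "cmp p1 i1 = ident E1" "cmp p2 i2 = ident E2"
      "cmp p1 i2 = zero E2 E1" "cmp p2 i1 = zero E1 E2"
    using obtain_biproduct[OF E1 E2] by blast
  have j_Hom: "j1 \<in> Hom B E1" "j2 \<in> Hom B E2"
    using ideal_subset_Hom[OF J1 B E1] ideal_subset_Hom[OF J2 B E2] j1 j2 by blast+
  let ?j = "add (cmp i1 j1) (cmp i2 j2)"
  have "?j \<in> ideal_sum add J1 J2 B C"
    using ideal_cmp_left[OF J1 B E1 C j1 inj(1)] ideal_cmp_left[OF J2 B E2 C j2 inj(2)]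
    unfolding ideal_sum_def by blast
  moreover have "\<exists>g\<in>Hom C E'. j' = cmp g ?j"
    if E': "E' \<in> Ob" and j': "j' \<in> ideal_sum add J1 J2 B E'" for E' j'
  proof -
    obtain a b where j'_eq: "j' = add a b" and ab: "a \<in> J1 B E'" "b \<in> J2 B E'"
      using j' unfolding ideal_sum_def by blast
    obtain g1 where g1: "g1 \<in> Hom E1 E'" "a = cmp g1 j1"
      using factor1[OF E' ab(1)] by blast
    obtain g2 where g2: "g2 \<in> Hom E2 E'" "b = cmp g2 j2"
      using factor2[OF E' ab(2)] by blast
    have "j' = cmp (add (cmp g1 p1) (cmp g2 p2)) ?j"
      using cmp_through_biproduct[OF B E1 E2 C E' inj proj biprod j_Hom g1(1) g2(1)] j'_eq g1 g2
      by simp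
    moreover have "add (cmp g1 p1) (cmp g2 p2) \<in> Hom C E'"
      using add_closed cmp_closed C E' E1 E2 proj g1(1) g2(1) by meson
    ultimately show ?thesis by blast
  qed
  ultimately show "\<exists>E\<in>Ob. \<exists>j\<in>ideal_sum add J1 J2 B E.
      \<forall>E'\<in>Ob. \<forall>j'\<in>ideal_sum add J1 J2 B E'. \<exists>g\<in>Hom E E'. j' = cmp g j"
    using C by blast
qed

end

lemma category_opposite:
  assumes "category Ob Hom cmp ident"
  shows "category Ob (\<lambda>A B. Hom B A) (\<lambda>g f. cmp f g) ident"
proof -
  note c = assms[unfolded category_def]
  have disjoint: "Hom A B \<inter> Hom A' B' = {}"
    if "A \<in> Ob" "B \<in> Ob" "A' \<in> Ob" "B' \<in> Ob" "(A, B) \<noteq> (A', B')" for A B A' B'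
    using c that by meson
  have assoc: "cmp f (cmp g h) = cmp (cmp f g) h"
    if "A \<in> Ob" "B \<in> Ob" "C \<in> Ob" "D \<in> Ob" "f \<in> Hom C D" "g \<in> Hom B C" "h \<in> Hom A B"
    for A B C D f g h
    using c that by blast
  show ?thesis unfolding category_def
  proof (intro conjI)
    show "\<forall>A\<in>Ob. \<forall>B\<in>Ob. \<forall>A'\<in>Ob. \<forall>B'\<in>Ob. (A, B) \<noteq> (A', B') \<longrightarrow> Hom B A \<inter> Hom B' A' = {}"
      using disjoint by blast
    show "\<forall>A\<in>Ob. \<forall>B\<in>Ob. \<forall>C\<in>Ob. \<forall>D\<in>Ob. \<forall>f\<in>Hom B A. \<forall>g\<in>Hom C B. \<forall>h\<in>Hom D C.
        cmp (cmp f g) h = cmp f (cmp g h)"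
      using assoc by (metis (no_types))
  qed (use c in blast)+
qed

lemma additive_category_opposite:
  assumes "additive_category Ob Hom cmp ident add zero"
  shows "additive_category Ob (\<lambda>A B. Hom B A) (\<lambda>g f. cmp f g) ident add (\<lambda>A B. zero B A)"
  unfolding additive_category_def preadditive_category_def
proof (intro conjI)
  show "category Ob (\<lambda>A B. Hom B A) (\<lambda>g f. cmp f g) ident"
    using assms category_opposite unfolding additive_category_def preadditive_category_def by blast
  have "hom_group (\<lambda>A B. Hom B A) add (\<lambda>A B. zero B A) A B = hom_group Hom add zero B A" for A B
    by (simp add: hom_group_def)
  then show "\<forall>A\<in>Ob. \<forall>B\<in>Ob. comm_group (hom_group (\<lambda>A B. Hom B A) add (\<lambda>A B. zero B A) A B)"
    using assms unfolding additive_category_def preadditive_category_def by auto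
  show "\<forall>A\<in>Ob. \<forall>B\<in>Ob. \<exists>C\<in>Ob. \<exists>i1\<in>Hom C A. \<exists>i2\<in>Hom C B. \<exists>p1\<in>Hom A C. \<exists>p2\<in>Hom B C.
      cmp i1 p1 = ident A \<and> cmp i2 p2 = ident B \<and> cmp i2 p1 = zero A B \<and> cmp i1 p2 = zero B A \<and>
      add (cmp p1 i1) (cmp p2 i2) = ident C"
    using assms unfolding additive_category_def by fast
qed (use assms in \<open>auto simp: additive_category_def preadditive_category_def\<close>)

lemma is_ideal_opposite:
  assumes cat: "category Ob Hom cmp ident" and J: "is_ideal Ob Hom cmp add zero J"
  shows "is_ideal Ob (\<lambda>A B. Hom B A) (\<lambda>g f. cmp f g) add (\<lambda>A B. zero B A) (\<lambda>A B. J B A)"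
  unfolding is_ideal_def
proof (intro conjI ballI)
  fix A B assume "A \<in> Ob" "B \<in> Ob"
  then show "subgroup (J B A) (hom_group (\<lambda>A B. Hom B A) add (\<lambda>A B. zero B A) A B)"
    using J unfolding is_ideal_def by (simp add: hom_group_def)
next
  fix A B C D h g f
  assume ob: "A \<in> Ob" "B \<in> Ob" "C \<in> Ob" "D \<in> Ob"
    and h: "h \<in> Hom B A" and g: "g \<in> J C B" and f: "f \<in> Hom D C"
  have "cmp h (cmp g f) \<in> J D A"
    using J ob h g f unfolding is_ideal_def by blast
  moreover have "cmp h (cmp g f) = cmp (cmp h g) f"
    using cat ob h f g ideal_subset_Hom[OF J, of C B] unfolding category_def by blast
  ultimately show "cmp (cmp h g) f \<in> J D A" by simp
qed

lemma preenveloping_opposite_iff: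
  "preenveloping Ob (\<lambda>A B. Hom B A) (\<lambda>g f. cmp f g) (\<lambda>A B. J B A) \<longleftrightarrow> precovering Ob Hom cmp J"
  unfolding preenveloping_def precovering_def ..

lemma ideal_sum_opposite:
  "ideal_sum add (\<lambda>A B. J1 B A) (\<lambda>A B. J2 B A) = (\<lambda>A B. ideal_sum add J1 J2 B A)"
  unfolding ideal_sum_def ..

lemma precovering_ideal_sum:
  assumes additive: "additive_category Ob Hom cmp ident add zero"
    and J1: "is_ideal Ob Hom cmp add zero J1" and J2: "is_ideal Ob Hom cmp add zero J2"
    and cov1: "precovering Ob Hom cmp J1" and cov2: "precovering Ob Hom cmp J2"
  shows "precovering Ob Hom cmp (ideal_sum add J1 J2)"
proof -
  have op: "additive_cat Ob (\<lambda>A B. Hom B A) (\<lambda>g f. cmp f g) ident add (\<lambda>A B. zero B A)"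
    using additive_category_opposite[OF additive] by (rule additive_cat.intro)
  have cat: "category Ob Hom cmp ident"
    using additive_cat.category[OF additive_cat.intro, OF additive] .
  have "preenveloping Ob (\<lambda>A B. Hom B A) (\<lambda>g f. cmp f g)
      (ideal_sum add (\<lambda>A B. J1 B A) (\<lambda>A B. J2 B A))"
    by (rule additive_cat.preenveloping_ideal_sum[OF op
          is_ideal_opposite[OF cat J1] is_ideal_opposite[OF cat J2]
          preenveloping_opposite_iff[THEN iffD2, OF cov1]
          preenveloping_opposite_iff[THEN iffD2, OF cov2]])
  then show ?thesis
    \<comment> \<open>uninstantiated, \<open>ideal_sum_opposite\<close> loops: up to eta its left side matches every sum\<close>
    by (simp only: ideal_sum_opposite[of add J1 J2] preenveloping_opposite_iff)
qed

theorem proposition2p1: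
  fixes Ob :: "'o set" and Hom :: "'o \<Rightarrow> 'o \<Rightarrow> 'm set"
    and cmp :: "'m \<Rightarrow> 'm \<Rightarrow> 'm" and ident :: "'o \<Rightarrow> 'm"
    and add :: "'m \<Rightarrow> 'm \<Rightarrow> 'm" and zero :: "'o \<Rightarrow> 'o \<Rightarrow> 'm"
    and J1 J2 :: "'o \<Rightarrow> 'o \<Rightarrow> 'm set"
  assumes "additive_category Ob Hom cmp ident add zero"
    and "is_ideal Ob Hom cmp add zero J1"
    and "is_ideal Ob Hom cmp add zero J2"
  shows "(preenveloping Ob Hom cmp J1 \<and> preenveloping Ob Hom cmp J2
            \<longrightarrow> preenveloping Ob Hom cmp (ideal_sum add J1 J2))
       \<and> (precovering Ob Hom cmp J1 \<and> precovering Ob Hom cmp J2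
            \<longrightarrow> precovering Ob Hom cmp (ideal_sum add J1 J2))"
  using additive_cat.preenveloping_ideal_sum[OF additive_cat.intro, OF assms]
    precovering_ideal_sum[OF assms]
  by blast

end
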